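(* Let $\mathcal{G}:\mathbb{R}^L\to\mathbb{R}^K$ be $C^2$ and suppose there is $\Lambda>0$ with $\|\nabla\mathcal{G}(u)\|_2\le\Lambda$, $\|\mathcal{H}(|\mathcal{G}|_\Gamma^2)(u)\|_2\le\Lambda$ and $\|\partial_i\nabla\mathcal{G}(u)\|_2\le\Lambda$ for all $u\in\mathbb{R}^L$, $1\le i\le L$. Let $\rho(u,t)=Z(t)^{-1}\exp(-\tfrac t2|y-\mathcal{G}(u)|_\Gamma^2)\rho_{\mathrm{prior}}(u)$, $t\in[0,1]$, with $\rho_{\mathrm{prior}}=\mathcal{N}(u_0,\Gamma_0)$. Then $t\mapsto\mathbb{E}_{\rho(t)}\big(|y-\mathcal{G}(u)|_\Gamma^2\big)$ is nonincreasing on $[0,1]$.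
   Context: $y\in\mathbb{R}^K$, $u_0\in\mathbb{R}^L$; $\Gamma$ ($K\times K$) and $\Gamma_0$ ($L\times L$) are symmetric positive definite; $|x|_\Gamma^2=x^\top\Gamma^{-1}x$; $Z(t)$ is the normalizing constant; $\mathcal{H}$ is the Hessian and $[\nabla\mathcal{G}]_{ij}=\partial_j\mathcal{G}_i$. (This $\rho$ is the strong solution of the weighted ensemble Kalman inversion Fokker–Planck equation.) *)

theory Defs
  imports "HOL-Analysis.Analysis"
begin

definition wnorm2 :: "real^'n^'n \<Rightarrow> real^'n \<Rightarrow> real" where
  "wnorm2 Gam x = x \<bullet> (matrix_inv Gam *v x)"

definition spd :: "real^'n^'n \<Rightarrow> bool" where
  "spd A \<longleftrightarrow> transpose A = A \<and> (\<forall>x. x \<noteq> 0 \<longrightarrow> x \<bullet> (A *v x) > 0)"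

definition dpart :: "(real^'l \<Rightarrow> 'b::real_normed_vector) \<Rightarrow> real^'l \<Rightarrow> 'l \<Rightarrow> 'b" where
  "dpart F u i = frechet_derivative F (at u) (axis i 1)"

text \<open>Jacobian [nabla G]_{ij} = d_j G_i, as a K x L matrix.\<close>
definition jac :: "(real^'l \<Rightarrow> real^'k) \<Rightarrow> real^'l \<Rightarrow> real^'l^'k" where
  "jac G u = jacobian G (at u)"

definition grad :: "(real^'l \<Rightarrow> real) \<Rightarrow> real^'l \<Rightarrow> real^'l" where
  "grad f u = (\<chi> j. dpart f u j)"

definition hess :: "(real^'l \<Rightarrow> real) \<Rightarrow> real^'l \<Rightarrow> real^'l^'l" where
  "hess f u = jac (grad f) u"

definition opnorm2 :: "real^'m^'n \<Rightarrow> real" where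
  "opnorm2 A = onorm (\<lambda>x. A *v x)"

definition C2 :: "(real^'l \<Rightarrow> real^'k) \<Rightarrow> bool" where
  "C2 G \<longleftrightarrow> (\<forall>u. G differentiable at u) \<and> (\<forall>u. jac G differentiable at u)
      \<and> (\<forall>i. continuous_on UNIV (\<lambda>u. dpart (jac G) u i))"

definition gauss_pdf :: "real^'l \<Rightarrow> real^'l^'l \<Rightarrow> real^'l \<Rightarrow> real" where
  "gauss_pdf u0 Gam0 u =
     exp (- wnorm2 Gam0 (u - u0) / 2) / sqrt ((2 * pi) ^ CARD('l) * det Gam0)"

definition Zc :: "(real^'l \<Rightarrow> real^'k) \<Rightarrow> real^'k \<Rightarrow> real^'k^'k \<Rightarrow> real^'l \<Rightarrow> real^'l^'l \<Rightarrow> real \<Rightarrow> real" where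
  "Zc G y Gam u0 Gam0 t =
     (\<integral>u. exp (- t / 2 * wnorm2 Gam (y - G u)) * gauss_pdf u0 Gam0 u \<partial>lborel)"

definition rho :: "(real^'l \<Rightarrow> real^'k) \<Rightarrow> real^'k \<Rightarrow> real^'k^'k \<Rightarrow> real^'l \<Rightarrow> real^'l^'l \<Rightarrow> real^'l \<Rightarrow> real \<Rightarrow> real" where
  "rho G y Gam u0 Gam0 u t =
     exp (- t / 2 * wnorm2 Gam (y - G u)) * gauss_pdf u0 Gam0 u / Zc G y Gam u0 Gam0 t"

definition misfit_exp :: "(real^'l \<Rightarrow> real^'k) \<Rightarrow> real^'k \<Rightarrow> real^'k^'k \<Rightarrow> real^'l \<Rightarrow> real^'l^'l \<Rightarrow> real \<Rightarrow> real" where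
  "misfit_exp G y Gam u0 Gam0 t =
     (\<integral>u. wnorm2 Gam (y - G u) * rho G y Gam u0 Gam0 u t \<partial>lborel)"

end

theory Submission
  imports Defs "HOL-Probability.Distributions"
begin

text \<open>Write \<open>\<Phi> u = |y - G u|\<^sup>2\<^sub>\<Gamma>\<close>. The posterior at time \<open>t\<close> is the prior tilted by
  \<open>exp (- t \<Phi> / 2)\<close>, so passing from time \<open>s\<close> to \<open>t \<ge> s\<close> reweights the posterior at \<open>s\<close> by
  \<open>exp (- (t - s) \<Phi> / 2)\<close>, a decreasing function of \<open>\<Phi>\<close>. By Chebyshev's integral inequality,
  reweighting by a decreasing function of \<open>\<Phi>\<close> cannot increase the mean of \<open>\<Phi>\<close>.
  The analysis only has to make the integrals exist: the Jacobian bound makes \<open>G\<close> Lipschitz,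
  so \<open>\<Phi>\<close> grows at most quadratically, while the prior decays like \<open>exp (- c |u|\<^sup>2)\<close>.\<close>

lemma spd_mult_matrix_inv:
  fixes A :: "real^'n^'n"
  assumes "spd A"
  shows "A ** matrix_inv A = mat 1"
proof -
  have "\<forall>x. A *v x = 0 \<longrightarrow> x = 0"
    using assms unfolding spd_def by (metis inner_zero_right less_irrefl)
  then have "invertible A"
    using matrix_left_invertible_ker invertible_left_inverse by blast
  then have "\<exists>A'. A ** A' = mat 1 \<and> A' ** A = mat 1"
    unfolding invertible_def by blast
  then show ?thesis
    unfolding matrix_inv_def by (rule someI2_ex) blast
qed

lemma wnorm2_pos:
  fixes A :: "real^'n^'n"
  assumes "spd A" "x \<noteq> 0"
  shows "0 < wnorm2 A x"
proof -
  define v where "v = matrix_inv A *v x"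
  have x: "x = A *v v"
    unfolding v_def using spd_mult_matrix_inv[OF assms(1)]
    by (metis matrix_vector_mul_assoc matrix_vector_mul_lid)
  then have "v \<noteq> 0" using assms(2) by auto
  then have "0 < v \<bullet> (A *v v)" using assms(1) unfolding spd_def by blast
  then show ?thesis unfolding wnorm2_def v_def[symmetric] using x by (simp add: inner_commute)
qed

lemma wnorm2_nonneg:
  fixes A :: "real^'n^'n"
  assumes "spd A"
  shows "0 \<le> wnorm2 A x"
  using wnorm2_pos[OF assms, of x] by (cases "x = 0") (auto simp: wnorm2_def)

lemma wnorm2_scaleR: "wnorm2 A (c *\<^sub>R x) = c\<^sup>2 * wnorm2 A x"
  unfolding wnorm2_def by (simp add: matrix_vector_mult_scaleR power2_eq_square)

lemma continuous_on_wnorm2 [continuous_intros]: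
  assumes "continuous_on S f"
  shows "continuous_on S (\<lambda>x. wnorm2 A (f x))"
proof -
  have "continuous_on S (\<lambda>x. matrix_inv A *v f x)"
    by (rule continuous_on_compose2[OF matrix_vector_mult_linear_continuous_on[of UNIV] assms]) simp
  then show ?thesis unfolding wnorm2_def by (intro continuous_intros assms)
qed

lemma abs_wnorm2_le_onorm: "\<bar>wnorm2 A x\<bar> \<le> onorm ((*v) (matrix_inv A)) * (norm x)\<^sup>2"
proof -
  have "\<bar>wnorm2 A x\<bar> \<le> norm x * norm (matrix_inv A *v x)"
    unfolding wnorm2_def by (rule Cauchy_Schwarz_ineq2)
  also have "\<dots> \<le> norm x * (onorm ((*v) (matrix_inv A)) * norm x)"
    by (intro mult_left_mono onorm) auto
  finally show ?thesis by (simp add: power2_eq_square mult_ac)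
qed

lemma spd_wnorm2_ge:
  fixes A :: "real^'n^'n"
  assumes "spd A"
  obtains lam where "0 < lam" "\<And>x. lam * (norm x)\<^sup>2 \<le> wnorm2 A x"
proof -
  obtain i :: 'n where True by blast
  have "sphere (0::real^'n) 1 \<noteq> {}"
    using norm_axis_1[of i] by (metis mem_sphere_0 empty_iff)
  then obtain z where z: "z \<in> sphere 0 1" "\<And>w. w \<in> sphere 0 1 \<Longrightarrow> wnorm2 A z \<le> wnorm2 A w"
    using continuous_attains_inf[OF compact_sphere _ continuous_on_wnorm2[OF continuous_on_id]]
    by blast
  show ?thesis
  proof (rule that)
    show "0 < wnorm2 A z" using z(1) wnorm2_pos[OF assms, of z] by (metis mem_sphere_0 norm_zero zero_neq_one)
    show "wnorm2 A z * (norm x)\<^sup>2 \<le> wnorm2 A x" for x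
    proof (cases "x = 0")
      case True
      then show ?thesis by (simp add: wnorm2_def)
    next
      case False
      then have "wnorm2 A z \<le> wnorm2 A ((1 / norm x) *\<^sub>R x)" by (intro z(2)) simp
      also have "\<dots> = wnorm2 A x / (norm x)\<^sup>2" by (simp add: wnorm2_scaleR power_divide)
      finally show ?thesis using False by (simp add: field_simps)
    qed
  qed
qed

lemma integrable_exp_neg_square:
  fixes c :: real
  assumes "0 < c"
  shows "integrable lborel (\<lambda>x::real. exp (- c * x\<^sup>2))"
proof -
  define \<sigma> where "\<sigma> = sqrt (1 / (2 * c))"
  have \<sigma>: "0 < \<sigma>" "2 * \<sigma>\<^sup>2 = 1 / c" using assms by (simp_all add: \<sigma>_def)
  have "exp (- c * x\<^sup>2) = sqrt (2 * pi * \<sigma>\<^sup>2) * normal_density 0 \<sigma> x" for x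
  proof -
    have "- x\<^sup>2 / (2 * \<sigma>\<^sup>2) = - c * x\<^sup>2" using \<sigma>(2) assms by simp
    then show ?thesis unfolding normal_density_def using \<sigma>(1) by (simp del: real_sqrt_gt_0_iff)
  qed
  then show ?thesis
    using integrable_normal_density[OF \<sigma>(1)] by (simp add: integrable_mult_right)
qed

lemma integrable_exp_neg_norm_square:
  fixes c :: real
  assumes "0 < c"
  shows "integrable lborel (\<lambda>x::'a::euclidean_space. exp (- c * (norm x)\<^sup>2))"
proof -
  have factor: "ennreal (exp (- c * (norm x)\<^sup>2)) = (\<Prod>b\<in>Basis. ennreal (exp (- c * (x \<bullet> b)\<^sup>2)))"
    for x :: 'a
  proof -
    have "(norm x)\<^sup>2 = (\<Sum>b\<in>Basis. (x \<bullet> b)\<^sup>2)"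
      unfolding power2_norm_eq_inner by (subst euclidean_inner) (simp add: power2_eq_square)
    then show ?thesis
      by (simp add: sum_distrib_left exp_sum[symmetric] sum_negf prod_ennreal)
  qed
  have "(\<integral>\<^sup>+x. ennreal (exp (- c * (norm x)\<^sup>2)) \<partial>(lborel::'a measure))
      = (\<Prod>b\<in>(Basis::'a set). \<integral>\<^sup>+x. ennreal (exp (- c * x\<^sup>2)) \<partial>lborel)"
    unfolding factor by (rule nn_integral_lborel_prod) auto
  also have "\<dots> < \<infinity>"
    using integrable_exp_neg_square[OF assms] unfolding integrable_iff_bounded
    by (simp add: power_less_top_ennreal)
  finally show ?thesis
    unfolding integrable_iff_bounded by (auto intro!: borel_measurable_continuous_onI continuous_intros)
qed

lemma one_plus_mult_exp_le:
  fixes c r :: real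
  assumes "0 < c" "0 \<le> r"
  shows "(1 + r) * exp (- c * r) \<le> (1 + 2 / c) * exp (- (c / 2) * r)"
proof -
  have "1 + r \<le> (1 + 2 / c) * (1 + c * r / 2)"
    using assms by (simp add: field_simps)
  also have "\<dots> \<le> (1 + 2 / c) * exp (c * r / 2)"
    using exp_ge_add_one_self[of "c * r / 2"] assms by (intro mult_left_mono) auto
  finally have "(1 + r) * exp (- c * r) \<le> (1 + 2 / c) * exp (c * r / 2) * exp (- c * r)"
    by (intro mult_right_mono) auto
  also have "\<dots> = (1 + 2 / c) * exp (- (c / 2) * r)"
    by (simp add: mult.assoc exp_add[symmetric])
  finally show ?thesis .
qed

lemma integrable_gaussian_dominated:
  fixes f :: "'a::euclidean_space \<Rightarrow> real"
  assumes "0 < c" "continuous_on UNIV f"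
    and "\<And>x. \<bar>f x\<bar> \<le> C * ((1 + (norm x)\<^sup>2) * exp (- c * (norm x)\<^sup>2))"
  shows "integrable lborel f"
proof (rule Bochner_Integration.integrable_bound)
  show "integrable lborel (\<lambda>x::'a. C * (1 + 2 / c) * exp (- (c / 2) * (norm x)\<^sup>2))"
    using \<open>0 < c\<close> by (intro integrable_mult_right integrable_exp_neg_norm_square) simp
  show "f \<in> borel_measurable lborel"
    using assms(2) by (simp add: borel_measurable_continuous_onI)
  show "AE x in lborel. norm (f x) \<le> norm (C * (1 + 2 / c) * exp (- (c / 2) * (norm x)\<^sup>2))"
  proof (rule AE_I2)
    fix x :: 'a
    have "0 < (1 + (norm x)\<^sup>2) * exp (- c * (norm x)\<^sup>2)"
      by (simp add: add_pos_nonneg)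
    moreover have "0 \<le> C * ((1 + (norm x)\<^sup>2) * exp (- c * (norm x)\<^sup>2))"
      using assms(3)[of x] by (rule order_trans[OF abs_ge_zero])
    ultimately have "0 \<le> C" by (simp add: zero_le_mult_iff)
    then have "C * ((1 + (norm x)\<^sup>2) * exp (- c * (norm x)\<^sup>2))
        \<le> C * ((1 + 2 / c) * exp (- (c / 2) * (norm x)\<^sup>2))"
      using \<open>0 < c\<close> by (intro mult_left_mono one_plus_mult_exp_le) simp_all
    with assms(3)[of x] have "\<bar>f x\<bar> \<le> C * ((1 + 2 / c) * exp (- (c / 2) * (norm x)\<^sup>2))"
      by (rule order_trans)
    moreover have "0 \<le> 1 + 2 / c" using \<open>0 < c\<close> by simp
    ultimately show "norm (f x) \<le> norm (C * (1 + 2 / c) * exp (- (c / 2) * (norm x)\<^sup>2))"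
      using \<open>0 \<le> C\<close> by (simp add: abs_mult mult.assoc)
  qed
qed

lemma integral_mult_le_oppositely_ordered:
  fixes P w m :: "'a \<Rightarrow> real"
  assumes m: "integrable M m" and Pm: "integrable M (\<lambda>x. P x * m x)"
    and wm: "integrable M (\<lambda>x. w x * m x)" and Pwm: "integrable M (\<lambda>x. P x * w x * m x)"
    and m_nonneg: "\<And>x. 0 \<le> m x" and opposite: "\<And>u v. (P u - P v) * (w u - w v) \<le> 0"
  shows "(\<integral>x. P x * w x * m x \<partial>M) * (\<integral>x. m x \<partial>M) \<le> (\<integral>x. P x * m x \<partial>M) * (\<integral>x. w x * m x \<partial>M)"
proof -
  define A' Z' A Z where "A' = (\<integral>x. P x * w x * m x \<partial>M)" and "Z' = (\<integral>x. w x * m x \<partial>M)"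
    and "A = (\<integral>x. P x * m x \<partial>M)" and "Z = (\<integral>x. m x \<partial>M)"
  \<comment> \<open>Integrate \<open>(P u - P v) (w u - w v) m u m v \<le> 0\<close> first in \<open>u\<close>, then in \<open>v\<close>;
    iterating avoids the product measure and hence any \<open>\<sigma>\<close>-finiteness assumption on \<open>M\<close>.\<close>
  define F where "F v = (\<integral>u. (P u - P v) * (w u - w v) * m u \<partial>M)" for v
  have F_eq: "F v = A' - P v * Z' - w v * A + P v * w v * Z" for v
  proof -
    have "F v = (\<integral>u. P u * w u * m u - P v * (w u * m u) - w v * (P u * m u) + P v * w v * m u \<partial>M)"
      unfolding F_def by (rule Bochner_Integration.integral_cong) (simp_all add: algebra_simps)
    then show ?thesis using m Pm wm Pwm by (simp add: A'_def Z'_def A_def Z_def)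
  qed
  have F_nonpos: "F v \<le> 0" for v
  proof -
    have "0 \<le> (\<integral>u. - ((P u - P v) * (w u - w v) * m u) \<partial>M)"
      using opposite m_nonneg by (intro Bochner_Integration.integral_nonneg) (simp add: mult_nonpos_nonneg)
    then show ?thesis unfolding F_def by simp
  qed
  have "(\<integral>v. F v * m v \<partial>M) = (\<integral>v. A' * m v - Z' * (P v * m v) - A * (w v * m v) + Z * (P v * w v * m v) \<partial>M)"
    unfolding F_eq by (rule Bochner_Integration.integral_cong) (simp_all add: algebra_simps)
  also have "\<dots> = A' * Z - Z' * A - A * Z' + Z * A'"
    using m Pm wm Pwm by (simp add: A'_def Z'_def A_def Z_def)
  also have "\<dots> = 2 * (A' * Z - A * Z')"
    by (simp add: algebra_simps)
  finally have "2 * (A' * Z - A * Z') = (\<integral>v. F v * m v \<partial>M)" ..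
  also have "\<dots> \<le> 0"
  proof -
    have "0 \<le> (\<integral>v. - (F v * m v) \<partial>M)"
      using F_nonpos m_nonneg by (intro Bochner_Integration.integral_nonneg) (simp add: mult_nonpos_nonneg)
    then show ?thesis by simp
  qed
  finally show ?thesis unfolding A'_def Z'_def A_def Z_def by simp
qed

definition tilted_mean :: "'a measure \<Rightarrow> ('a \<Rightarrow> real) \<Rightarrow> ('a \<Rightarrow> real) \<Rightarrow> real \<Rightarrow> real" where
  "tilted_mean M g Phi t =
     (\<integral>u. Phi u * (exp (- t * Phi u) * g u) \<partial>M) / (\<integral>u. exp (- t * Phi u) * g u \<partial>M)"

lemma diff_mult_exp_diff_nonpos:
  fixes a b c :: real
  assumes "0 \<le> c"
  shows "(a - b) * (exp (- c * a) - exp (- c * b)) \<le> 0"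
proof (cases "a \<le> b")
  case True
  then have "exp (- c * b) \<le> exp (- c * a)" using assms by (simp add: mult_left_mono)
  with True show ?thesis by (simp add: mult_nonpos_nonneg)
next
  case False
  then have "exp (- c * a) \<le> exp (- c * b)" using assms by (simp add: mult_left_mono)
  with False show ?thesis by (simp add: mult_nonneg_nonpos)
qed

lemma integrable_tilted:
  fixes g Phi :: "'a \<Rightarrow> real"
  assumes g: "integrable M g" and Phi_g: "integrable M (\<lambda>u. Phi u * g u)"
    and Phi_meas: "Phi \<in> borel_measurable M"
    and Phi_nonneg: "\<And>u. 0 \<le> Phi u" and g_nonneg: "\<And>u. 0 \<le> g u" and "0 \<le> \<tau>"
  shows "integrable M (\<lambda>u. exp (- \<tau> * Phi u) * g u)"
    and "integrable M (\<lambda>u. Phi u * (exp (- \<tau> * Phi u) * g u))"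
proof -
  have bounds: "0 \<le> exp (- \<tau> * Phi u) * g u" "exp (- \<tau> * Phi u) * g u \<le> g u" for u
    using \<open>0 \<le> \<tau>\<close> Phi_nonneg[of u] g_nonneg[of u] by (simp_all add: mult_left_le_one_le)
  have g_meas: "g \<in> borel_measurable M" using g by (rule borel_measurable_integrable)
  show "integrable M (\<lambda>u. exp (- \<tau> * Phi u) * g u)"
  proof (rule Bochner_Integration.integrable_bound[OF g])
    show "(\<lambda>u. exp (- \<tau> * Phi u) * g u) \<in> borel_measurable M" using Phi_meas g_meas by measurable
    show "AE u in M. norm (exp (- \<tau> * Phi u) * g u) \<le> norm (g u)"
      using bounds g_nonneg by (intro AE_I2) simp
  qed
  show "integrable M (\<lambda>u. Phi u * (exp (- \<tau> * Phi u) * g u))"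
  proof (rule Bochner_Integration.integrable_bound[OF Phi_g])
    show "(\<lambda>u. Phi u * (exp (- \<tau> * Phi u) * g u)) \<in> borel_measurable M"
      using Phi_meas g_meas by measurable
    show "AE u in M. norm (Phi u * (exp (- \<tau> * Phi u) * g u)) \<le> norm (Phi u * g u)"
      using bounds g_nonneg Phi_nonneg by (intro AE_I2) (simp add: abs_of_nonneg mult_left_mono)
  qed
qed

lemma tilted_mean_antimono:
  fixes g Phi :: "'a \<Rightarrow> real"
  assumes "integrable M g" "integrable M (\<lambda>u. Phi u * g u)" "Phi \<in> borel_measurable M"
    and Phi_nonneg: "\<And>u. 0 \<le> Phi u" and g_nonneg: "\<And>u. 0 \<le> g u"
    and "0 \<le> s" "s \<le> t"
  shows "tilted_mean M g Phi t \<le> tilted_mean M g Phi s"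
proof -
  define e where "e \<tau> u = exp (- \<tau> * Phi u)" for \<tau> u
  define A where "A \<tau> = (\<integral>u. Phi u * (e \<tau> u * g u) \<partial>M)" for \<tau>
  define Z where "Z \<tau> = (\<integral>u. e \<tau> u * g u \<partial>M)" for \<tau>
  note integrable = integrable_tilted[OF assms(1-5), folded e_def]
  have tilt: "e (t - s) u * (e s u * g u) = e t u * g u" for u
    by (simp add: e_def mult.assoc[symmetric] exp_add[symmetric] algebra_simps)
  have "(\<integral>u. Phi u * e (t - s) u * (e s u * g u) \<partial>M) * Z s
      \<le> A s * (\<integral>u. e (t - s) u * (e s u * g u) \<partial>M)"
    unfolding A_def Z_def
  proof (rule integral_mult_le_oppositely_ordered)
    show "integrable M (\<lambda>u. e s u * g u)" "integrable M (\<lambda>u. Phi u * (e s u * g u))"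
      "integrable M (\<lambda>u. e (t - s) u * (e s u * g u))"
      "integrable M (\<lambda>u. Phi u * e (t - s) u * (e s u * g u))"
      unfolding mult.assoc tilt using integrable \<open>0 \<le> s\<close> \<open>s \<le> t\<close> by auto
    show "0 \<le> e s u * g u" for u using \<open>0 \<le> s\<close> g_nonneg by (simp add: e_def)
    show "(Phi u - Phi v) * (e (t - s) u - e (t - s) v) \<le> 0" for u v
      unfolding e_def using \<open>s \<le> t\<close> by (intro diff_mult_exp_diff_nonpos) simp
  qed
  then have "A t * Z s \<le> A s * Z t"
    unfolding mult.assoc tilt by (simp add: A_def Z_def)
  moreover have "Z t \<le> Z s"
    unfolding Z_def using integrable \<open>0 \<le> s\<close> \<open>s \<le> t\<close> g_nonneg Phi_nonneg
    by (intro integral_mono) (auto simp: e_def intro!: mult_right_mono)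
  moreover have "0 \<le> A s" "0 \<le> Z t"
    unfolding A_def Z_def e_def using g_nonneg Phi_nonneg
    by (auto intro!: Bochner_Integration.integral_nonneg)
  \<comment> \<open>If \<open>Z t = 0\<close>, the left-hand side is the junk value \<open>0 / 0 = 0\<close>.\<close>
  ultimately show ?thesis
    unfolding tilted_mean_def A_def[symmetric] Z_def[symmetric] e_def[symmetric]
    by (cases "Z t = 0") (auto simp: divide_simps mult.commute)
qed

lemma tilted_mean_cmult:
  "tilted_mean M (\<lambda>u. c * g u) Phi t = (if c = 0 then 0 else tilted_mean M g Phi t)"
proof -
  have "(\<integral>u. Phi u * (exp (- t * Phi u) * (c * g u)) \<partial>M)
      = c * (\<integral>u. Phi u * (exp (- t * Phi u) * g u) \<partial>M)"
    "(\<integral>u. exp (- t * Phi u) * (c * g u) \<partial>M) = c * (\<integral>u. exp (- t * Phi u) * g u \<partial>M)"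
    by (simp_all add: mult.left_commute)
  then show ?thesis unfolding tilted_mean_def by simp
qed

lemma lipschitz_of_jac_bound:
  assumes "\<And>u. G differentiable at u" "\<And>u. opnorm2 (jac G u) \<le> L"
  shows "norm (G u - G v) \<le> L * norm (u - v)"
proof (rule differentiable_bound[OF convex_UNIV, of G "\<lambda>x h. jac G x *v h"])
  show "(G has_derivative (\<lambda>h. jac G x *v h)) (at x within UNIV)" for x
    using assms(1)[of x] jacobian_works unfolding jac_def by blast
  show "onorm (\<lambda>h. jac G x *v h) \<le> L" for x
    using assms(2)[of x] unfolding opnorm2_def .
qed auto

lemma wnorm2_misfit_quadratic_growth:
  fixes G :: "'a::real_normed_vector \<Rightarrow> real^'k"
  assumes "\<And>u v. norm (G u - G v) \<le> L * norm (u - v)"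
  obtains K where "\<And>u. \<bar>wnorm2 A (y - G u)\<bar> \<le> K * (1 + (norm u)\<^sup>2)"
proof
  define B a where "B = onorm ((*v) (matrix_inv A))" and "a = norm (y - G 0)"
  have "0 \<le> B" unfolding B_def by (intro onorm_pos_le) simp
  fix u
  have "norm (y - G u) \<le> a + L * norm u"
    using norm_triangle_ineq4[of "y - G 0" "G u - G 0"] assms[of u 0] unfolding a_def by simp
  then have "(norm (y - G u))\<^sup>2 \<le> (a + L * norm u)\<^sup>2"
    by (intro power_mono) auto
  also have "\<dots> \<le> 2 * (a\<^sup>2 + (L * norm u)\<^sup>2)"
    using zero_le_power2[of "a - L * norm u"] unfolding power2_diff power2_sum
    by (simp add: algebra_simps)
  also have "\<dots> \<le> 2 * (a\<^sup>2 + L\<^sup>2) * (1 + (norm u)\<^sup>2)"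
    using zero_le_power2[of "a * norm u"] zero_le_power2[of L]
    by (simp add: algebra_simps power_mult_distrib)
  finally have "B * (norm (y - G u))\<^sup>2 \<le> B * (2 * (a\<^sup>2 + L\<^sup>2) * (1 + (norm u)\<^sup>2))"
    using \<open>0 \<le> B\<close> by (rule mult_left_mono)
  then show "\<bar>wnorm2 A (y - G u)\<bar> \<le> B * (2 * (a\<^sup>2 + L\<^sup>2)) * (1 + (norm u)\<^sup>2)"
    using abs_wnorm2_le_onorm[of A "y - G u"] unfolding B_def by (simp add: mult.assoc)
qed

lemma exp_neg_half_wnorm2_le:
  fixes A :: "real^'n^'n"
  assumes "spd A"
  obtains c C where "0 < c" "0 < C"
    "\<And>u. exp (- wnorm2 A (u - u0) / 2) \<le> C * exp (- c * (norm u)\<^sup>2)"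
proof -
  obtain lam where lam: "0 < lam" "\<And>x. lam * (norm x)\<^sup>2 \<le> wnorm2 A x"
    using spd_wnorm2_ge[OF assms] by blast
  have "exp (- wnorm2 A (u - u0) / 2) \<le> exp (lam * (norm u0)\<^sup>2 / 2) * exp (- (lam / 4) * (norm u)\<^sup>2)"
    for u
  proof -
    have "norm u \<le> norm (u - u0) + norm u0" using norm_triangle_sub[of u u0] by simp
    then have "(norm u)\<^sup>2 \<le> (norm (u - u0) + norm u0)\<^sup>2" by (intro power_mono) auto
    also have "\<dots> \<le> 2 * (norm (u - u0))\<^sup>2 + 2 * (norm u0)\<^sup>2"
      using zero_le_power2[of "norm (u - u0) - norm u0"] unfolding power2_diff power2_sum
      by (simp add: algebra_simps)
    finally have "lam * ((norm u)\<^sup>2 / 2 - (norm u0)\<^sup>2) \<le> lam * (norm (u - u0))\<^sup>2"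
      using lam(1) by (intro mult_left_mono) auto
    also have "\<dots> \<le> wnorm2 A (u - u0)" by (rule lam(2))
    finally show ?thesis
      unfolding exp_add[symmetric] by (simp add: algebra_simps)
  qed
  with lam(1) show ?thesis by (intro that[of "lam / 4" "exp (lam * (norm u0)\<^sup>2 / 2)"]) simp_all
qed

lemma integrable_prior_misfit:
  fixes G :: "real^'l \<Rightarrow> real^'k" and u0 :: "real^'l" and Gam0 :: "real^'l^'l"
  assumes "spd Gam0" "continuous_on UNIV G" "\<And>u v. norm (G u - G v) \<le> L * norm (u - v)"
  defines "g \<equiv> \<lambda>u. exp (- wnorm2 Gam0 (u - u0) / 2)"
  shows "integrable lborel g" and "integrable lborel (\<lambda>u. wnorm2 Gam (y - G u) * g u)"
proof -
  obtain K where K: "\<And>u. \<bar>wnorm2 Gam (y - G u)\<bar> \<le> K * (1 + (norm u)\<^sup>2)"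
    using wnorm2_misfit_quadratic_growth[OF assms(3)] by blast
  obtain c C where "0 < c" "0 < C" and C: "\<And>u. g u \<le> C * exp (- c * (norm u)\<^sup>2)"
    using exp_neg_half_wnorm2_le[OF \<open>spd Gam0\<close>] unfolding g_def by blast
  have g_cont: "continuous_on UNIV g" unfolding g_def by (intro continuous_intros) auto
  show "integrable lborel g"
    using \<open>0 < c\<close> g_cont
  proof (rule integrable_gaussian_dominated)
    fix u :: "real^'l"
    have "C * exp (- c * (norm u)\<^sup>2) \<le> C * ((1 + (norm u)\<^sup>2) * exp (- c * (norm u)\<^sup>2))"
      using \<open>0 < C\<close> by (intro mult_left_mono) simp_all
    with C[of u] show "\<bar>g u\<bar> \<le> C * ((1 + (norm u)\<^sup>2) * exp (- c * (norm u)\<^sup>2))"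
      by (simp add: g_def)
  qed
  show "integrable lborel (\<lambda>u. wnorm2 Gam (y - G u) * g u)"
    using \<open>0 < c\<close>
  proof (rule integrable_gaussian_dominated)
    show "continuous_on UNIV (\<lambda>u. wnorm2 Gam (y - G u) * g u)"
      by (intro continuous_intros assms(2) g_cont)
    fix u :: "real^'l"
    have "\<bar>wnorm2 Gam (y - G u)\<bar> * g u \<le> K * (1 + (norm u)\<^sup>2) * (C * exp (- c * (norm u)\<^sup>2))"
      using K[of u] C[of u] order_trans[OF abs_ge_zero K] by (intro mult_mono) (simp_all add: g_def)
    then show "\<bar>wnorm2 Gam (y - G u) * g u\<bar> \<le> K * C * ((1 + (norm u)\<^sup>2) * exp (- c * (norm u)\<^sup>2))"
      by (simp add: g_def abs_mult mult_ac)
  qed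
qed

lemma misfit_exp_eq_tilted_mean:
  fixes u0 :: "real^'l"
  shows "misfit_exp G y Gam u0 Gam0 t
    = (if det Gam0 = 0 then 0
       else tilted_mean lborel (\<lambda>u. exp (- wnorm2 Gam0 (u - u0) / 2)) (\<lambda>u. wnorm2 Gam (y - G u)) (t / 2))"
proof -
  define S where "S = sqrt ((2 * pi) ^ CARD('l) * det Gam0)"
  have "misfit_exp G y Gam u0 Gam0 t = tilted_mean lborel
      (\<lambda>u. (1 / S) * exp (- wnorm2 Gam0 (u - u0) / 2)) (\<lambda>u. wnorm2 Gam (y - G u)) (t / 2)"
    unfolding misfit_exp_def rho_def Zc_def tilted_mean_def gauss_pdf_def S_def[symmetric]
    by (simp add: mult.assoc)
  also have "\<dots> = (if 1 / S = 0 then 0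
      else tilted_mean lborel (\<lambda>u. exp (- wnorm2 Gam0 (u - u0) / 2)) (\<lambda>u. wnorm2 Gam (y - G u)) (t / 2))"
    by (rule tilted_mean_cmult)
  \<comment> \<open>The prior's normalisation cancels; for \<open>det Gam0 = 0\<close> (impossible for \<open>spd Gam0\<close>, but
    not worth proving) it is the junk division by zero.\<close>
  also have "1 / S = 0 \<longleftrightarrow> det Gam0 = 0" unfolding S_def by simp
  finally show ?thesis .
qed

theorem lemma4p3:
  fixes G :: "real^'l \<Rightarrow> real^'k"
    and y :: "real^'k" and u0 :: "real^'l"
    and Gam :: "real^'k^'k" and Gam0 :: "real^'l^'l"
    and Lam :: real
  assumes "spd Gam" and "spd Gam0"
    and "C2 G"
    and "Lam > 0"
    and "\<And>u. opnorm2 (jac G u) \<le> Lam"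
    and "\<And>u. opnorm2 (hess (\<lambda>v. wnorm2 Gam (G v)) u) \<le> Lam"
    and "\<And>u i. opnorm2 (dpart (jac G) u i) \<le> Lam"
  shows "\<forall>s t. 0 \<le> s \<longrightarrow> s \<le> t \<longrightarrow> t \<le> 1 \<longrightarrow>
           misfit_exp G y Gam u0 Gam0 t \<le> misfit_exp G y Gam u0 Gam0 s"
proof (intro allI impI)
  fix s t :: real assume "0 \<le> s" "s \<le> t" "t \<le> 1"
  define Phi where "Phi u = wnorm2 Gam (y - G u)" for u
  define g where "g u = exp (- wnorm2 Gam0 (u - u0) / 2)" for u
  have G_diff: "\<And>u. G differentiable at u" using \<open>C2 G\<close> unfolding C2_def by blast
  then have G_cont: "continuous_on UNIV G"
    by (simp add: differentiable_imp_continuous_on differentiable_on_def)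
  have "integrable lborel g" "integrable lborel (\<lambda>u. Phi u * g u)"
    using integrable_prior_misfit[OF \<open>spd Gam0\<close> G_cont lipschitz_of_jac_bound[OF G_diff assms(5)]]
    unfolding Phi_def g_def by auto
  moreover have "Phi \<in> borel_measurable lborel"
    unfolding Phi_def using G_cont by (simp add: borel_measurable_continuous_onI continuous_intros)
  ultimately have "tilted_mean lborel g Phi (t / 2) \<le> tilted_mean lborel g Phi (s / 2)"
    using \<open>0 \<le> s\<close> \<open>s \<le> t\<close> wnorm2_nonneg[OF \<open>spd Gam\<close>]
    by (intro tilted_mean_antimono) (auto simp: Phi_def g_def)
  then show "misfit_exp G y Gam u0 Gam0 t \<le> misfit_exp G y Gam u0 Gam0 s"
    unfolding misfit_exp_eq_tilted_mean Phi_def[symmetric] g_def[symmetric] by simp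
qed

end
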